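(* Assume in addition that $\mathrm{SNR}_i\ge\Gamma$ almost surely for all $i$, and that $R_i=R_{\max}$ with probability $q$ and $R_i=0$ with probability $1-q$, for some constants $R_{\max}>0$ and $q\in(0,1]$. Then $$\lambda^\star=\frac{q\,W T_{\mathrm{data}}R_{\max}}{\big(L-\tfrac12\big)T_{\mathrm{syn}}+\tfrac{T_{\mathrm{sib}}-T_{\mathrm{syn}}}{2}+q(T_{\mathrm{ra}}+T_{\mathrm{data}})},$$ and an optimal stopping rule is $N^\star=\min\{n\ge1: R_n\ge \frac{1}{1+\phi}R_{\max}\}$, where $$\phi=\frac{\big(L-\tfrac12\big)T_{\mathrm{syn}}+\tfrac{T_{\mathrm{sib}}-T_{\mathrm{syn}}}{2}}{q(T_{\mathrm{ra}}+T_{\mathrm{data}})}.$$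
   Context: Standing setup (cell search model). Fix constants $T_{\mathrm{syn}}>0$, $T_{\mathrm{sib}}\ge T_{\mathrm{syn}}$ with $T_{\mathrm{sib}}/T_{\mathrm{syn}}$ a positive integer, $T_{\mathrm{ra}}>0$, $T_{\mathrm{data}}>0$, $W>0$, an integer $L\ge1$, and a real threshold $\Gamma$. Let $(\mathrm{SNR}_i,\beta_i,Y_i,Z_i)_{i\ge1}$ be independent and identically distributed random tuples with $\mathrm{SNR}_i\ge0$, $\beta_i\in[0,1]$, $Y_i\ge0$ with $\mathbb{E}[Y_i]=T_{\mathrm{syn}}/2$, and $Z_i$ uniformly distributed on $\{jT_{\mathrm{syn}}: j=0,1,\dots,T_{\mathrm{sib}}/T_{\mathrm{syn}}-1\}$ and independent of $\mathrm{SNR}_i$. The selection metric of cell $i$ is $R_i=\beta_i\log(1+\mathrm{SNR}_i)$. For $n\ge1$ define $$T_n=\sum_{i=1}^n\Big(Y_i+(L-1)T_{\mathrm{syn}}+Z_i\,\mathbb{I}(\mathrm{SNR}_i\ge\Gamma)\Big)+T_{\mathrm{ra}}+T_{\mathrm{data}},\qquad U_n=W\,T_{\mathrm{data}}\max_{1\le i\le n}R_i\,\mathbb{I}(\mathrm{SNR}_i\ge\Gamma).$$ $\mathcal{C}$ denotes the set of stopping times $N\ge1$ with respect to the filtration generated by $(\mathrm{SNR}_i,\beta_i,Y_i,Z_i)_{i\le n}$ such that $\mathbb{E}[T_N]<\infty$, and $\lambda^\star=\sup_{N\in\mathcal{C}}\mathbb{E}[U_N]/\mathbb{E}[T_N]$.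 *)

theory Defs
  imports "HOL-Probability.Probability"
begin

definition Rmet :: "(nat \<Rightarrow> 'a \<Rightarrow> real) \<Rightarrow> (nat \<Rightarrow> 'a \<Rightarrow> real) \<Rightarrow> nat \<Rightarrow> 'a \<Rightarrow> real" where
  "Rmet SNR beta i \<omega> = beta i \<omega> * ln (1 + SNR i \<omega>)"

definition Tcost :: "(nat \<Rightarrow> 'a \<Rightarrow> real) \<Rightarrow> (nat \<Rightarrow> 'a \<Rightarrow> real) \<Rightarrow> (nat \<Rightarrow> 'a \<Rightarrow> real)
    \<Rightarrow> real \<Rightarrow> nat \<Rightarrow> real \<Rightarrow> real \<Rightarrow> real \<Rightarrow> nat \<Rightarrow> 'a \<Rightarrow> real" where
  "Tcost SNR Y Z Tsyn L \<Gamma> Tra Tdata n \<omega> =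
     (\<Sum>i=1..n. Y i \<omega> + (real L - 1) * Tsyn + Z i \<omega> * (if SNR i \<omega> \<ge> \<Gamma> then 1 else 0))
     + Tra + Tdata"

definition Ureward :: "(nat \<Rightarrow> 'a \<Rightarrow> real) \<Rightarrow> (nat \<Rightarrow> 'a \<Rightarrow> real) \<Rightarrow> real \<Rightarrow> real \<Rightarrow> real
    \<Rightarrow> nat \<Rightarrow> 'a \<Rightarrow> real" where
  "Ureward SNR beta \<Gamma> W Tdata n \<omega> =
     W * Tdata * Max ((\<lambda>i. Rmet SNR beta i \<omega> * (if SNR i \<omega> \<ge> \<Gamma> then 1 else 0)) ` {1..n})"

definition cs_filt :: "'a measure \<Rightarrow> (nat \<Rightarrow> 'a \<Rightarrow> real) \<Rightarrow> (nat \<Rightarrow> 'a \<Rightarrow> real)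
    \<Rightarrow> (nat \<Rightarrow> 'a \<Rightarrow> real) \<Rightarrow> (nat \<Rightarrow> 'a \<Rightarrow> real) \<Rightarrow> nat \<Rightarrow> 'a set set" where
  "cs_filt M SNR beta Y Z n = sigma_sets (space M)
     (\<Union>i\<in>{1..n}. \<Union>X\<in>{SNR i, beta i, Y i, Z i}. {X -` A \<inter> space M | A. A \<in> sets borel})"

definition stopping_time_ge1 :: "'a measure \<Rightarrow> (nat \<Rightarrow> 'a set set) \<Rightarrow> ('a \<Rightarrow> enat) \<Rightarrow> bool" where
  "stopping_time_ge1 M F N \<longleftrightarrow> (\<forall>\<omega>\<in>space M. N \<omega> \<ge> 1) \<and>
     (\<forall>n. {\<omega>\<in>space M. N \<omega> = enat n} \<in> F n)"

text \<open>Process stopped at N (used where N is finite).\<close>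
definition stopped :: "(nat \<Rightarrow> 'a \<Rightarrow> real) \<Rightarrow> ('a \<Rightarrow> enat) \<Rightarrow> 'a \<Rightarrow> real" where
  "stopped X N \<omega> = X (the_enat (N \<omega>)) \<omega>"

text \<open>The class C: stopping times N \<ge> 1 with E[T_N] < \<infinity> (so N is a.s. finite and T_N integrable,
  T_N being nonnegative).\<close>
definition classC :: "'a measure \<Rightarrow> (nat \<Rightarrow> 'a set set) \<Rightarrow> (nat \<Rightarrow> 'a \<Rightarrow> real) \<Rightarrow> ('a \<Rightarrow> enat) \<Rightarrow> bool" where
  "classC M F T N \<longleftrightarrow> stopping_time_ge1 M F N \<and> (AE \<omega> in M. N \<omega> \<noteq> \<infinity>)
     \<and> integrable M (stopped T N)"

definition ratio :: "'a measure \<Rightarrow> (nat \<Rightarrow> 'a \<Rightarrow> real) \<Rightarrow> (nat \<Rightarrow> 'a \<Rightarrow> real) \<Rightarrow> ('a \<Rightarrow> enat) \<Rightarrow> real" where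
  "ratio M T U N = (\<integral>\<omega>. stopped U N \<omega> \<partial>M) / (\<integral>\<omega>. stopped T N \<omega> \<partial>M)"

definition lam_star :: "'a measure \<Rightarrow> (nat \<Rightarrow> 'a set set) \<Rightarrow> (nat \<Rightarrow> 'a \<Rightarrow> real) \<Rightarrow> (nat \<Rightarrow> 'a \<Rightarrow> real) \<Rightarrow> real" where
  "lam_star M F T U = Sup {ratio M T U N | N. classC M F T N}"

definition first_exceed :: "(nat \<Rightarrow> 'a \<Rightarrow> real) \<Rightarrow> real \<Rightarrow> 'a \<Rightarrow> enat" where
  "first_exceed R c \<omega> = (if \<exists>n\<ge>1. R n \<omega> \<ge> c then enat (LEAST n. n \<ge> 1 \<and> R n \<omega> \<ge> c) else \<infinity>)"

end

theory Submission
  imports Defs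
begin

(* Each cell costs D time units on average, independently of what was observed before it, so
   by Wald's identity a stopping rule N has E[T_N] = T_ra + T_data + D * sum_j P(N > j).
   Its reward is W T_data R_max times the probability p that a cell of rate R_max is searched
   before stopping; by independence p = q * sum_j P(N > j, none of the first j cells has rate
   R_max) <= min 1 (q * sum_j P(N > j)), and elementary algebra bounds the reward rate of every
   rule by q W T_data R_max / (D + q (T_ra + T_data)).  The rates are almost surely 0 or R_max,
   so any threshold in (0, R_max] stops at the first cell of rate R_max; for that rule
   P(N > j) = (1 - q)^j and p = 1, which attains the bound. *)

lemma first_exceed_ge_one: "1 \<le> first_exceed X t \<omega>"
  unfolding first_exceed_def one_enat_def
  by (auto intro: LeastI2_ex)

lemma less_first_exceed_iff:
  "enat m < first_exceed X t \<omega> \<longleftrightarrow> (\<forall>k\<in>{1..m}. X k \<omega> < t)"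
proof (cases "\<exists>n\<ge>1. t \<le> X n \<omega>")
  case True
  let ?L = "LEAST n. 1 \<le> n \<and> t \<le> X n \<omega>"
  have L: "1 \<le> ?L \<and> t \<le> X ?L \<omega>" using True by (rule LeastI_ex)
  have "m < ?L \<longleftrightarrow> (\<forall>k\<in>{1..m}. X k \<omega> < t)"
  proof
    show "m < ?L \<Longrightarrow> \<forall>k\<in>{1..m}. X k \<omega> < t"
    proof
      fix k assume "m < ?L" "k \<in> {1..m}"
      then have "\<not> (1 \<le> k \<and> t \<le> X k \<omega>)" by (intro not_less_Least) auto
      with \<open>k \<in> {1..m}\<close> show "X k \<omega> < t" by auto
    qed
    show "\<forall>k\<in>{1..m}. X k \<omega> < t \<Longrightarrow> m < ?L"
      using L by (metis atLeastAtMost_iff not_le not_less)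
  qed
  then show ?thesis using True by (simp add: first_exceed_def)
next
  case False
  then have "first_exceed X t \<omega> = \<infinity>" by (simp add: first_exceed_def)
  moreover have "\<forall>k\<in>{1..m}. X k \<omega> < t" using False by (metis atLeastAtMost_iff not_le)
  ultimately show ?thesis by simp
qed

lemma first_exceed_eq_enat_iff:
  "first_exceed X t \<omega> = enat n \<longleftrightarrow> 1 \<le> n \<and> t \<le> X n \<omega> \<and> (\<forall>k\<in>{1..<n}. X k \<omega> < t)"
proof -
  have "first_exceed X t \<omega> = enat n \<longleftrightarrow> enat (n - 1) < first_exceed X t \<omega> \<and> \<not> enat n < first_exceed X t \<omega> \<and> 1 \<le> n"
    using first_exceed_ge_one[of X t \<omega>]
    by (cases "first_exceed X t \<omega>") (auto simp: one_enat_def)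
  also have "\<dots> \<longleftrightarrow> 1 \<le> n \<and> t \<le> X n \<omega> \<and> (\<forall>k\<in>{1..<n}. X k \<omega> < t)"
    unfolding less_first_exceed_iff
    by (cases n) (auto simp: not_less atLeastLessThanSuc_atLeastAtMost atLeastAtMostSuc_conv)
  finally show ?thesis .
qed

lemma reward_rate_bound:
  fixes a p s C D q :: real
  assumes "0 \<le> a" "0 < C" "0 \<le> D" "0 < q" "p \<le> 1" "p \<le> q * s" "0 \<le> s"
  shows "a * p / (C + D * s) \<le> q * a / (D + q * C)"
proof -
  have "a * p * D \<le> a * (q * s) * D"
    using assms by (simp add: mult_left_mono mult_right_mono)
  moreover have "a * p * (q * C) \<le> a * 1 * (q * C)"
    using assms by (intro mult_left_mono mult_right_mono) simp_all
  ultimately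
  have "(a * p) * (D + q * C) \<le> (q * a) * (C + D * s)"
    by (simp add: algebra_simps)
  moreover have "0 < C + D * s" "0 < D + q * C"
    using assms by (simp_all add: add_pos_nonneg add_nonneg_pos)
  ultimately show ?thesis by (simp add: divide_le_eq le_divide_eq)
qed

context prob_space
begin

lemma AE_in_finite_values:
  fixes X :: "'a \<Rightarrow> real"
  assumes X: "X \<in> borel_measurable M" and S: "finite S"
    and total: "(\<Sum>x\<in>S. prob {\<omega>\<in>space M. X \<omega> = x}) = 1"
  shows "AE \<omega> in M. X \<omega> \<in> S"
proof -
  have "prob (\<Union>x\<in>S. {\<omega>\<in>space M. X \<omega> = x}) = (\<Sum>x\<in>S. prob {\<omega>\<in>space M. X \<omega> = x})"
    using X S by (intro finite_measure_finite_Union) (auto simp: disjoint_family_on_def)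
  then have "AE \<omega> in M. \<omega> \<in> (\<Union>x\<in>S. {\<omega>\<in>space M. X \<omega> = x})"
    using total X S by (intro AE_prob_1) simp
  then show ?thesis by auto
qed

lemma integral_finite_values:
  fixes X :: "'a \<Rightarrow> real"
  assumes X: "X \<in> borel_measurable M" and S: "finite S" and X_values: "AE \<omega> in M. X \<omega> \<in> S"
  shows "integrable M X" and "(\<integral>\<omega>. X \<omega> \<partial>M) = (\<Sum>x\<in>S. x * prob {\<omega>\<in>space M. X \<omega> = x})"
proof -
  let ?level = "\<lambda>x. {\<omega>\<in>space M. X \<omega> = x}"
  let ?f = "\<lambda>\<omega>. \<Sum>x\<in>S. x * indicator (?level x) \<omega>"
  have level: "?level x \<in> events" for x using X by measurable
  have f: "integrable M ?f"
    using level by (auto intro!: integrable_real_indicator simp: less_top[symmetric])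
  have f_eq: "AE \<omega> in M. X \<omega> = ?f \<omega>"
    using X_values AE_space
  proof eventually_elim
    case (elim \<omega>)
    then have "?f \<omega> = (\<Sum>x\<in>S. if x = X \<omega> then x else 0)"
      by (intro sum.cong) (auto simp: indicator_def)
    with elim S show ?case by simp
  qed
  have f_meas: "?f \<in> borel_measurable M" using level by measurable
  show "integrable M X" using integrable_cong_AE[OF X f_meas f_eq] f by simp
  have "(\<integral>\<omega>. X \<omega> \<partial>M) = (\<integral>\<omega>. ?f \<omega> \<partial>M)" by (rule integral_cong_AE[OF X f_meas f_eq])
  also have "\<dots> = (\<Sum>x\<in>S. x * prob (?level x))"
    using level by (subst Bochner_Integration.integral_sum) (auto simp: less_top[symmetric])
  finally show "(\<integral>\<omega>. X \<omega> \<partial>M) = (\<Sum>x\<in>S. x * prob (?level x))" .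
qed

end

lemma Int_stable_vimage_sets: "Int_stable {X -` B \<inter> space M | B. B \<in> sets S}"
proof (safe intro!: Int_stableI)
  fix A B assume "A \<in> sets S" "B \<in> sets S"
  then show "\<exists>C. X -` A \<inter> space M \<inter> (X -` B \<inter> space M) = X -` C \<inter> space M \<and> C \<in> sets S"
    by (intro exI[of _ "A \<inter> B"]) auto
qed

lemma (in sigma_algebra) sigma_sets_vimage_indicator_subset:
  assumes A: "A \<in> M"
  shows "sigma_sets \<Omega> {indicator A -` B \<inter> \<Omega> | B. B \<in> sets (borel :: real measure)} \<subseteq> M"
proof (rule sigma_sets_subset, safe)
  fix B :: "real set"
  have "indicator A -` B \<inter> \<Omega> = (if 1 \<in> B then A else {}) \<union> (if 0 \<in> B then \<Omega> - A else {})"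
    using sets_into_space[OF A] by (auto simp: indicator_def of_bool_def split: if_splits)
  then show "indicator A -` B \<inter> \<Omega> \<in> M" using A by auto
qed

definition history :: "'a measure \<Rightarrow> 'b measure \<Rightarrow> (nat \<Rightarrow> 'a \<Rightarrow> 'b) \<Rightarrow> nat \<Rightarrow> 'a set set" where
  "history M S X j = sigma_sets (space M) (\<Union>i\<in>{1..j}. {X i -` B \<inter> space M | B. B \<in> sets S})"

lemma sigma_algebra_history: "sigma_algebra (space M) (history M S X j)"
  unfolding history_def by (rule sigma_algebra_sigma_sets) auto

lemma ennreal_sum_eq_suminf_if:
  fixes c :: "nat \<Rightarrow> real"
  assumes "\<And>j. j < n \<Longrightarrow> 0 \<le> c (Suc j)"
  shows "ennreal (\<Sum>i=1..n. c i) = (\<Sum>j. ennreal (if j < n then c (Suc j) else 0))"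
proof -
  have "(\<Sum>j. ennreal (if j < n then c (Suc j) else 0)) = (\<Sum>j<n. ennreal (if j < n then c (Suc j) else 0))"
    by (rule suminf_finite) auto
  also have "\<dots> = (\<Sum>j<n. ennreal (c (Suc j)))" by (intro sum.cong) auto
  also have "\<dots> = ennreal (\<Sum>j<n. c (Suc j))" using assms by (intro sum_ennreal) auto
  finally show ?thesis by (simp add: sum.atLeast1_atMost_eq)
qed

context prob_space
begin

lemma history_subset_events:
  assumes "indep_vars (\<lambda>_. S) X {1..}"
  shows "history M S X j \<subseteq> events"
  unfolding history_def
proof (rule sets.sigma_sets_subset, safe)
  fix i B assume "i \<in> {1..j}" "B \<in> sets S"
  with assms show "X i -` B \<inter> space M \<in> events"
    by (auto simp: indep_vars_def intro: measurable_sets)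
qed

lemma indep_set_history_next:
  assumes indep: "indep_vars (\<lambda>_. S) X {1..}"
  shows "indep_set (history M S X j) (sigma_sets (space M) {X (Suc j) -` B \<inter> space M | B. B \<in> sets S})"
proof -
  let ?E = "\<lambda>i. {X i -` B \<inter> space M | B. B \<in> sets S}"
  let ?I = "\<lambda>b::bool. if b then {1..j} else {Suc j}"
  have "indep_sets ?E {1..}" using indep unfolding indep_vars_def2 by simp
  then have "indep_sets ?E (\<Union>b. ?I b)" by (rule indep_sets_mono_index[rotated]) auto
  then have "indep_sets (\<lambda>b. sigma_sets (space M) (\<Union>i\<in>?I b. ?E i)) UNIV"
    by (rule indep_sets_collect_sigma) (auto simp: Int_stable_vimage_sets disjoint_family_on_def)
  moreover have "(\<lambda>b. sigma_sets (space M) (\<Union>i\<in>?I b. ?E i))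
      = case_bool (history M S X j) (sigma_sets (space M) (?E (Suc j)))"
    by (auto simp: fun_eq_iff history_def split: bool.split)
  ultimately show ?thesis unfolding indep_set_def by simp
qed

lemma prob_Int_history_next:
  assumes indep: "indep_vars (\<lambda>_. S) X {1..}"
    and A: "A \<in> history M S X j" and B: "B \<in> sets S"
  shows "prob (A \<inter> (X (Suc j) -` B \<inter> space M)) = prob A * prob (X (Suc j) -` B \<inter> space M)"
  using indep_set_history_next[OF indep, of j] A B
  unfolding indep_sets2_eq by (blast intro: sigma_sets.Basic)

lemma integral_indicator_history_mult:
  fixes g :: "'b \<Rightarrow> real"
  assumes indep: "indep_vars (\<lambda>_. S) X {1..}"
    and A: "A \<in> history M S X j" and g: "g \<in> borel_measurable S"
    and int: "integrable M (\<lambda>\<omega>. g (X (Suc j) \<omega>))"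
  shows "(\<integral>\<omega>. indicator A \<omega> * g (X (Suc j) \<omega>) \<partial>M) = prob A * (\<integral>\<omega>. g (X (Suc j) \<omega>) \<partial>M)"
proof -
  interpret H: sigma_algebra "space M" "history M S X j" by (rule sigma_algebra_history)
  have A_ev: "A \<in> events" using A history_subset_events[OF indep] by auto
  have X_meas: "X (Suc j) \<in> measurable M S" using indep by (simp add: indep_vars_def)
  have indicator_sub: "sigma_sets (space M) {indicator A -` B \<inter> space M | B. B \<in> sets (borel :: real measure)}
      \<subseteq> history M S X j"
    by (rule H.sigma_sets_vimage_indicator_subset[OF A])
  have next_sub: "sigma_sets (space M) {(\<lambda>\<omega>. g (X (Suc j) \<omega>)) -` B \<inter> space M | B. B \<in> sets borel}
      \<subseteq> sigma_sets (space M) {X (Suc j) -` B \<inter> space M | B. B \<in> sets S}"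
  proof (rule sigma_sets_mono, safe)
    fix B :: "real set" assume "B \<in> sets borel"
    then have "g -` B \<inter> space S \<in> sets S" using g by (simp add: measurable_sets)
    moreover have "(\<lambda>\<omega>. g (X (Suc j) \<omega>)) -` B \<inter> space M = X (Suc j) -` (g -` B \<inter> space S) \<inter> space M"
      using X_meas by (auto dest: measurable_space)
    ultimately show "(\<lambda>\<omega>. g (X (Suc j) \<omega>)) -` B \<inter> space M
        \<in> sigma_sets (space M) {X (Suc j) -` B \<inter> space M | B. B \<in> sets S}"
      by (metis (mono_tags, lifting) mem_Collect_eq sigma_sets.Basic)
  qed
  have "indep_set
      (sigma_sets (space M) {indicator A -` B \<inter> space M | B. B \<in> sets (borel :: real measure)})
      (sigma_sets (space M) {(\<lambda>\<omega>. g (X (Suc j) \<omega>)) -` B \<inter> space M | B. B \<in> sets borel})"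
    using indep_set_history_next[OF indep, of j] unfolding indep_set_def
    by (rule indep_sets_mono_sets) (use indicator_sub next_sub in \<open>auto split: bool.split\<close>)
  then have "indep_var borel (indicator A) borel (\<lambda>\<omega>. g (X (Suc j) \<omega>))"
    unfolding indep_var_eq using A_ev measurable_compose[OF X_meas g] by simp
  moreover have "integrable M (indicator A :: 'a \<Rightarrow> real)"
    using A_ev by (simp add: less_top[symmetric])
  ultimately show ?thesis using int A_ev by (simp add: indep_var_lebesgue_integral)
qed

lemma wald_nn_integral:
  fixes c :: "nat \<Rightarrow> 'a \<Rightarrow> real" and N :: "'a \<Rightarrow> enat"
  assumes c_int: "\<And>j. integrable M (c (Suc j))"
    and c_nonneg: "\<And>j. AE \<omega> in M. 0 \<le> c (Suc j) \<omega>"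
    and reached: "\<And>j. {\<omega>\<in>space M. enat (Suc j) \<le> N \<omega>} \<in> events"
    and factor: "\<And>j. (\<integral>\<omega>. indicator {\<omega>\<in>space M. enat (Suc j) \<le> N \<omega>} \<omega> * c (Suc j) \<omega> \<partial>M)
                       = prob {\<omega>\<in>space M. enat (Suc j) \<le> N \<omega>} * \<mu>"
    and \<mu>: "0 \<le> \<mu>"
    and N_finite: "AE \<omega> in M. N \<omega> \<noteq> \<infinity>"
  shows "(\<integral>\<^sup>+\<omega>. ennreal (\<Sum>i=1..the_enat (N \<omega>). c i \<omega>) \<partial>M)
       = ennreal \<mu> * (\<Sum>j. ennreal (prob {\<omega>\<in>space M. enat (Suc j) \<le> N \<omega>}))"
proof -
  let ?G = "\<lambda>j. {\<omega>\<in>space M. enat (Suc j) \<le> N \<omega>}"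
  let ?term = "\<lambda>j \<omega>. ennreal (indicator (?G j) \<omega> * c (Suc j) \<omega>)"
  have term_meas: "?term j \<in> borel_measurable M" for j
    using reached[of j] borel_measurable_integrable[OF c_int[of j]] by measurable
  have "AE \<omega> in M. \<forall>j. 0 \<le> c (Suc j) \<omega>" using c_nonneg by (simp add: AE_all_countable)
  then have "AE \<omega> in M. ennreal (\<Sum>i=1..the_enat (N \<omega>). c i \<omega>) = (\<Sum>j. ?term j \<omega>)"
    using N_finite AE_space
  proof eventually_elim
    case (elim \<omega>)
    then obtain n where n: "N \<omega> = enat n" by auto
    have "(\<Sum>j. ?term j \<omega>) = (\<Sum>j. ennreal (if j < n then c (Suc j) \<omega> else 0))"
      using elim by (intro suminf_cong) (auto simp: n)
    also have "\<dots> = ennreal (\<Sum>i=1..n. c i \<omega>)"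
      using elim by (intro ennreal_sum_eq_suminf_if[symmetric]) auto
    finally show ?case by (simp add: n)
  qed
  then have "(\<integral>\<^sup>+\<omega>. ennreal (\<Sum>i=1..the_enat (N \<omega>). c i \<omega>) \<partial>M) = (\<integral>\<^sup>+\<omega>. (\<Sum>j. ?term j \<omega>) \<partial>M)"
    by (rule nn_integral_cong_AE)
  also have "\<dots> = (\<Sum>j. \<integral>\<^sup>+\<omega>. ?term j \<omega> \<partial>M)"
    using term_meas by (rule nn_integral_suminf)
  also have "\<dots> = (\<Sum>j. ennreal \<mu> * ennreal (prob (?G j)))"
  proof (rule suminf_cong)
    fix j
    have "integrable M (\<lambda>\<omega>. indicator (?G j) \<omega> * c (Suc j) \<omega>)"
      using integrable_real_mult_indicator[OF reached c_int] by (simp add: mult.commute)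
    moreover have "AE \<omega> in M. 0 \<le> indicator (?G j) \<omega> * c (Suc j) \<omega>"
      using c_nonneg[of j] by eventually_elim auto
    ultimately have "(\<integral>\<^sup>+\<omega>. ?term j \<omega> \<partial>M) = ennreal (\<integral>\<omega>. indicator (?G j) \<omega> * c (Suc j) \<omega> \<partial>M)"
      by (rule nn_integral_eq_integral)
    then have "(\<integral>\<^sup>+\<omega>. ?term j \<omega> \<partial>M) = ennreal (prob (?G j) * \<mu>)"
      by (simp only: factor)
    then show "(\<integral>\<^sup>+\<omega>. ?term j \<omega> \<partial>M) = ennreal \<mu> * ennreal (prob (?G j))"
      using \<mu> by (simp add: ennreal_mult mult.commute)
  qed
  also have "\<dots> = ennreal \<mu> * (\<Sum>j. ennreal (prob (?G j)))" by (rule ennreal_suminf_cmult)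
  finally show ?thesis .
qed

end

locale cell_search = prob_space M
  for M :: "'a measure"
    and SNR beta Y Z :: "nat \<Rightarrow> 'a \<Rightarrow> real"
    and Tsyn Tsib Tra Tdata W \<Gamma> Rmax q :: real
    and L K :: nat +
  assumes Tsyn: "Tsyn > 0"
    and K: "K \<ge> 1" "Tsib = real K * Tsyn"
    and Tra: "Tra > 0" and Tdata: "Tdata > 0" and W: "W > 0" and L: "L \<ge> 1"
    and iid_indep: "indep_vars (\<lambda>_. borel) (\<lambda>i \<omega>. (SNR i \<omega>, beta i \<omega>, Y i \<omega>, Z i \<omega>)) {1..}"
    and Y_nonneg: "\<forall>i\<ge>1. AE \<omega> in M. Y i \<omega> \<ge> 0"
    and Y_mean: "\<forall>i\<ge>1. integrable M (Y i) \<and> (\<integral>\<omega>. Y i \<omega> \<partial>M) = Tsyn / 2"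
    and Z_unif: "\<forall>i\<ge>1. \<forall>j<K. measure M {\<omega>\<in>space M. Z i \<omega> = real j * Tsyn} = 1 / real K"
    and SNR_Gamma: "\<forall>i\<ge>1. AE \<omega> in M. SNR i \<omega> \<ge> \<Gamma>"
    and Rmax: "Rmax > 0" and q: "0 < q" "q \<le> 1"
    and R_dist: "\<forall>i\<ge>1. measure M {\<omega>\<in>space M. Rmet SNR beta i \<omega> = Rmax} = q
                     \<and> measure M {\<omega>\<in>space M. Rmet SNR beta i \<omega> = 0} = 1 - q"
begin

abbreviation "R \<equiv> Rmet SNR beta"
abbreviation "T \<equiv> Tcost SNR Y Z Tsyn L \<Gamma> Tra Tdata"
abbreviation "U \<equiv> Ureward SNR beta \<Gamma> W Tdata"
abbreviation "F \<equiv> cs_filt M SNR beta Y Z"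
abbreviation "cell_space \<equiv> borel \<Otimes>\<^sub>M borel \<Otimes>\<^sub>M borel \<Otimes>\<^sub>M (borel :: real measure)"

definition cell :: "nat \<Rightarrow> 'a \<Rightarrow> real \<times> real \<times> real \<times> real" where
  "cell i \<omega> = (SNR i \<omega>, beta i \<omega>, Y i \<omega>, Z i \<omega>)"

definition search_time :: "nat \<Rightarrow> 'a \<Rightarrow> real" where
  "search_time i \<omega> = Y i \<omega> + (real L - 1) * Tsyn + Z i \<omega> * (if \<Gamma> \<le> SNR i \<omega> then 1 else 0)"

definition D :: real where
  "D = (real L - 1/2) * Tsyn + (Tsib - Tsyn) / 2"

lemma cell_indep: "indep_vars (\<lambda>_. cell_space) cell {1..}"
  using iid_indep by (simp add: borel_prod cell_def[abs_def])

lemma cell_measurable: "1 \<le> i \<Longrightarrow> cell i \<in> M \<rightarrow>\<^sub>M cell_space"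
  using cell_indep by (simp add: indep_vars_def)

lemma component_eq_cell:
  assumes "X \<in> {SNR i, beta i, Y i, Z i}"
  obtains p where "p \<in> borel_measurable cell_space" "X = (\<lambda>\<omega>. p (cell i \<omega>))"
proof -
  have "X = (\<lambda>\<omega>. fst (cell i \<omega>)) \<or> X = (\<lambda>\<omega>. fst (snd (cell i \<omega>)))
      \<or> X = (\<lambda>\<omega>. fst (snd (snd (cell i \<omega>)))) \<or> X = (\<lambda>\<omega>. snd (snd (snd (cell i \<omega>))))"
    using assms by (auto simp: cell_def)
  then show thesis by (elim disjE) (erule that[rotated]; measurable)+
qed

lemma component_measurable:
  assumes "1 \<le> i" "X \<in> {SNR i, beta i, Y i, Z i}"
  shows "X \<in> borel_measurable M"
  using component_eq_cell[OF assms(2)] cell_measurable[OF assms(1)] by (metis measurable_compose)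

lemma R_eq_cell: "R i = (\<lambda>\<omega>. (\<lambda>(s, b, y, z). b * ln (1 + s)) (cell i \<omega>))"
  by (simp add: fun_eq_iff Rmet_def cell_def)

lemma search_time_eq_cell:
  "search_time i = (\<lambda>\<omega>. (\<lambda>(s, b, y, z). y + (real L - 1) * Tsyn + z * (if \<Gamma> \<le> s then 1 else 0)) (cell i \<omega>))"
  by (simp add: fun_eq_iff search_time_def cell_def)

lemma R_measurable: "1 \<le> i \<Longrightarrow> R i \<in> borel_measurable M"
  unfolding R_eq_cell using cell_measurable by measurable

lemma search_time_measurable: "1 \<le> i \<Longrightarrow> search_time i \<in> borel_measurable M"
  unfolding search_time_eq_cell using cell_measurable by measurable

definition generators :: "nat \<Rightarrow> 'a set set" where
  "generators n = (\<Union>i\<in>{1..n}. \<Union>X\<in>{SNR i, beta i, Y i, Z i}. {X -` A \<inter> space M | A. A \<in> sets borel})"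

definition filtration :: "nat \<Rightarrow> 'a measure" where
  "filtration n = sigma (space M) (generators n)"

lemma generators_subset: "generators n \<subseteq> Pow (space M)"
  unfolding generators_def by auto

lemma sets_filtration: "sets (filtration n) = F n"
  unfolding filtration_def cs_filt_def generators_def[symmetric]
  using generators_subset by (simp add: sets_measure_of)

lemma space_filtration: "space (filtration n) = space M"
  unfolding filtration_def using generators_subset by simp

lemma filtration_mono: "m \<le> n \<Longrightarrow> sets (filtration m) \<subseteq> sets (filtration n)"
  unfolding filtration_def using generators_subset
  by (simp add: sets_measure_of sigma_sets_mono' generators_def UN_mono)

lemma filtration_subset_history: "sets (filtration n) \<subseteq> history M cell_space cell n"
proof -
  interpret H: sigma_algebra "space M" "history M cell_space cell n" by (rule sigma_algebra_history)
  have "generators n \<subseteq> history M cell_space cell n"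
  proof
    fix S assume "S \<in> generators n"
    then obtain i X A where i: "i \<in> {1..n}" and X: "X \<in> {SNR i, beta i, Y i, Z i}"
      and A: "A \<in> sets borel" and S: "S = X -` A \<inter> space M"
      unfolding generators_def by blast
    obtain p where p: "p \<in> borel_measurable cell_space" and Xp: "X = (\<lambda>\<omega>. p (cell i \<omega>))"
      using component_eq_cell[OF X] .
    have "S = cell i -` (p -` A \<inter> space cell_space) \<inter> space M"
      using cell_measurable[of i] i by (auto simp: S Xp dest: measurable_space)
    moreover have "p -` A \<inter> space cell_space \<in> sets cell_space" using p A by (simp add: measurable_sets)
    ultimately show "S \<in> history M cell_space cell n"
      using i unfolding history_def by (blast intro: sigma_sets.Basic)
  qed
  then show ?thesis
    unfolding filtration_def using generators_subset by (simp add: sets_measure_of H.sigma_sets_subset)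
qed

lemma filtration_subset_events: "sets (filtration n) \<subseteq> events"
  using filtration_subset_history history_subset_events[OF cell_indep] by blast

lemma component_measurable_filtration:
  assumes "1 \<le> i" "i \<le> n" "X \<in> {SNR i, beta i, Y i, Z i}"
  shows "X \<in> borel_measurable (filtration n)"
proof (rule measurableI)
  show "X \<omega> \<in> space borel" for \<omega> by simp
next
  fix A :: "real set" assume "A \<in> sets borel"
  then have "X -` A \<inter> space M \<in> generators n"
    using assms unfolding generators_def by (intro UN_I[where a=i] UN_I[where a=X]) auto
  then show "X -` A \<inter> space (filtration n) \<in> sets (filtration n)"
    unfolding space_filtration filtration_def using generators_subset
    by (simp add: sets_measure_of sigma_sets.Basic)
qed

lemma R_measurable_filtration: "1 \<le> i \<Longrightarrow> i \<le> n \<Longrightarrow> R i \<in> borel_measurable (filtration n)"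
  using component_measurable_filtration[of i n] unfolding Rmet_def by measurable

definition max_at :: "nat \<Rightarrow> 'a set" where
  "max_at i = {\<omega>\<in>space M. R i \<omega> = Rmax}"

lemma max_at_events: "1 \<le> i \<Longrightarrow> max_at i \<in> events"
  unfolding max_at_def using R_measurable by measurable

lemma prob_max_at: "1 \<le> i \<Longrightarrow> prob (max_at i) = q"
  using R_dist by (simp add: max_at_def)

lemma prob_Int_max_at:
  assumes A: "A \<in> sets (filtration j)"
  shows "prob (A \<inter> max_at (Suc j)) = prob A * q"
proof -
  let ?B = "(\<lambda>(s, b, y, z). b * ln (1 + s)) -` {Rmax} \<inter> space cell_space"
  have B: "?B \<in> sets cell_space" by measurable
  have max_eq: "max_at (Suc j) = cell (Suc j) -` ?B \<inter> space M"
    using cell_measurable[of "Suc j"] by (auto simp: max_at_def R_eq_cell dest: measurable_space)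
  have "A \<in> history M cell_space cell j" using A filtration_subset_history by blast
  then have "prob (A \<inter> max_at (Suc j)) = prob A * prob (max_at (Suc j))"
    unfolding max_eq by (rule prob_Int_history_next[OF cell_indep _ B])
  also have "prob (max_at (Suc j)) = q" by (rule prob_max_at) simp
  finally show ?thesis .
qed

lemma D_eq: "D = Tsyn / 2 + (real L - 1) * Tsyn + (real K - 1) * Tsyn / 2"
  unfolding D_def using K by (simp add: field_simps)

lemma D_pos: "0 < D"
  unfolding D_eq using Tsyn K L by (auto intro!: add_pos_nonneg)

lemma Z_values: "1 \<le> i \<Longrightarrow> AE \<omega> in M. Z i \<omega> \<in> (\<lambda>j. real j * Tsyn) ` {..<K}"
proof (rule AE_in_finite_values)
  assume i: "1 \<le> i"
  show "Z i \<in> borel_measurable M" using component_measurable[OF i] by simp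
  have "inj_on (\<lambda>j. real j * Tsyn) {..<K}" using Tsyn by (auto simp: inj_on_def)
  then have "(\<Sum>x\<in>(\<lambda>j. real j * Tsyn) ` {..<K}. prob {\<omega>\<in>space M. Z i \<omega> = x})
      = (\<Sum>j<K. prob {\<omega>\<in>space M. Z i \<omega> = real j * Tsyn})"
    by (simp add: sum.reindex)
  also have "\<dots> = 1" using Z_unif K i by simp
  finally show "(\<Sum>x\<in>(\<lambda>j. real j * Tsyn) ` {..<K}. prob {\<omega>\<in>space M. Z i \<omega> = x}) = 1" .
qed simp

lemma Z_integrable: "1 \<le> i \<Longrightarrow> integrable M (Z i)"
  using integral_finite_values(1)[OF _ _ Z_values] component_measurable by simp

lemma Z_mean:
  assumes i: "1 \<le> i"
  shows "(\<integral>\<omega>. Z i \<omega> \<partial>M) = (real K - 1) * Tsyn / 2"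
proof -
  have gauss: "(\<Sum>j<k. real j) = real k * (real k - 1) / 2" for k
    by (induction k) (auto simp: field_simps)
  have "inj_on (\<lambda>j. real j * Tsyn) {..<K}" using Tsyn by (auto simp: inj_on_def)
  then have "(\<integral>\<omega>. Z i \<omega> \<partial>M) = (\<Sum>j<K. real j * Tsyn * prob {\<omega>\<in>space M. Z i \<omega> = real j * Tsyn})"
    using integral_finite_values(2)[OF _ _ Z_values[OF i]] component_measurable[OF i]
    by (simp add: sum.reindex)
  also have "\<dots> = (\<Sum>j<K. real j * (Tsyn / real K))"
    using Z_unif i by (intro sum.cong) auto
  also have "\<dots> = (\<Sum>j<K. real j) * (Tsyn / real K)" by (rule sum_distrib_right[symmetric])
  also have "\<dots> = (real K - 1) * Tsyn / 2" using K by (simp add: gauss field_simps)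
  finally show ?thesis .
qed

lemma R_values: "1 \<le> i \<Longrightarrow> AE \<omega> in M. R i \<omega> \<in> {0, Rmax}"
  using R_measurable R_dist Rmax by (intro AE_in_finite_values) auto

lemma
  assumes i: "1 \<le> i"
  shows search_time_integrable: "integrable M (search_time i)"
    and search_time_mean: "(\<integral>\<omega>. search_time i \<omega> \<partial>M) = D"
    and search_time_nonneg: "AE \<omega> in M. 0 \<le> search_time i \<omega>"
proof -
  let ?s = "\<lambda>\<omega>. Y i \<omega> + (real L - 1) * Tsyn + Z i \<omega>"
  have s_eq: "AE \<omega> in M. search_time i \<omega> = ?s \<omega>"
    using SNR_Gamma i by (auto simp: search_time_def)
  have s_meas: "?s \<in> borel_measurable M"
    using component_measurable[OF i, of "Y i"] component_measurable[OF i, of "Z i"] by measurable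
  have s_int: "integrable M ?s" using Y_mean i Z_integrable[OF i] by auto
  note cong = search_time_measurable[OF i] s_meas s_eq
  show "integrable M (search_time i)" using integrable_cong_AE[OF cong] s_int by simp
  have "(\<integral>\<omega>. search_time i \<omega> \<partial>M) = (\<integral>\<omega>. ?s \<omega> \<partial>M)" by (rule integral_cong_AE[OF cong])
  also have "\<dots> = (\<integral>\<omega>. Y i \<omega> \<partial>M) + (real L - 1) * Tsyn + (\<integral>\<omega>. Z i \<omega> \<partial>M)"
    using Y_mean i Z_integrable[OF i] by (simp add: prob_space)
  also have "\<dots> = Tsyn / 2 + (real L - 1) * Tsyn + (real K - 1) * Tsyn / 2"
    using Y_mean i by (simp add: Z_mean[OF i])
  finally show "(\<integral>\<omega>. search_time i \<omega> \<partial>M) = D" unfolding D_eq .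
  show "AE \<omega> in M. 0 \<le> search_time i \<omega>"
    using s_eq Y_nonneg[rule_format, OF i] Z_values[OF i]
    by eventually_elim (use Tsyn L in auto)
qed

lemma integral_indicator_mult_search_time:
  assumes A: "A \<in> sets (filtration j)"
  shows "(\<integral>\<omega>. indicator A \<omega> * search_time (Suc j) \<omega> \<partial>M) = prob A * D"
proof -
  let ?g = "\<lambda>(s, b, y, z). y + (real L - 1) * Tsyn + z * (if \<Gamma> \<le> s then 1 else 0)"
  have g: "?g \<in> borel_measurable cell_space" by measurable
  have "A \<in> history M cell_space cell j" using A filtration_subset_history by blast
  moreover have "integrable M (\<lambda>\<omega>. ?g (cell (Suc j) \<omega>))"
    using search_time_integrable[of "Suc j"] by (simp add: search_time_eq_cell)
  ultimately have "(\<integral>\<omega>. indicator A \<omega> * ?g (cell (Suc j) \<omega>) \<partial>M)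
      = prob A * (\<integral>\<omega>. ?g (cell (Suc j) \<omega>) \<partial>M)"
    by (rule integral_indicator_history_mult[OF cell_indep _ g])
  then show ?thesis
    using search_time_mean[of "Suc j"] by (simp add: search_time_eq_cell)
qed

definition regular :: "'a \<Rightarrow> bool" where
  "regular \<omega> \<longleftrightarrow> (\<forall>i\<ge>1. 0 \<le> search_time i \<omega> \<and> \<Gamma> \<le> SNR i \<omega> \<and> R i \<omega> \<in> {0, Rmax})"

lemma AE_regular: "AE \<omega> in M. regular \<omega>"
proof -
  have "AE \<omega> in M. 1 \<le> i \<longrightarrow> 0 \<le> search_time i \<omega> \<and> \<Gamma> \<le> SNR i \<omega> \<and> R i \<omega> \<in> {0, Rmax}" for i
    by (cases "1 \<le> i") (use search_time_nonneg SNR_Gamma R_values in auto)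
  then show ?thesis unfolding regular_def by (simp add: AE_all_countable)
qed

definition reached :: "('a \<Rightarrow> enat) \<Rightarrow> nat \<Rightarrow> 'a set" where
  "reached N j = {\<omega>\<in>space M. enat (Suc j) \<le> N \<omega>}"

lemma stopping_time_eq_filtration:
  "stopping_time_ge1 M F N \<Longrightarrow> {\<omega>\<in>space M. N \<omega> = enat n} \<in> sets (filtration n)"
  unfolding stopping_time_ge1_def sets_filtration by auto

lemma reached_filtration:
  assumes N: "stopping_time_ge1 M F N"
  shows "reached N j \<in> sets (filtration j)"
proof -
  have stop_ev: "{\<omega>\<in>space M. N \<omega> = enat n} \<in> sets (filtration j)" if "n \<in> {..j}" for n
    using stopping_time_eq_filtration[OF N] filtration_mono that by blast
  have "reached N j = space (filtration j) - (\<Union>n\<in>{..j}. {\<omega>\<in>space M. N \<omega> = enat n})"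
    (is "?reached = ?rest")
  proof (rule set_eqI)
    show "\<omega> \<in> ?reached \<longleftrightarrow> \<omega> \<in> ?rest" for \<omega>
      by (cases "N \<omega>") (auto simp: reached_def space_filtration)
  qed
  also have "\<dots> \<in> sets (filtration j)" using stop_ev by (intro sets.Diff sets.top sets.finite_UN) auto
  finally show ?thesis .
qed

lemma reached_events: "stopping_time_ge1 M F N \<Longrightarrow> reached N j \<in> events"
  using reached_filtration filtration_subset_events by blast

lemma stopping_time_measurable:
  assumes N: "stopping_time_ge1 M F N"
  shows "N \<in> measurable M (count_space UNIV)"
proof -
  have finite_ev: "{\<omega>\<in>space M. N \<omega> = enat n} \<in> events" for n
    using stopping_time_eq_filtration[OF N] filtration_subset_events by blast
  have "N -` {\<infinity>} \<inter> space M = space M - (\<Union>n. {\<omega>\<in>space M. N \<omega> = enat n})"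
    by auto
  then have "N -` {\<infinity>} \<inter> space M \<in> events" using finite_ev by auto
  moreover have "N -` {enat n} \<inter> space M \<in> events" for n
    using finite_ev[of n] by (simp add: vimage_def Int_def conj_commute)
  ultimately have "N -` {a} \<inter> space M \<in> events" for a by (cases a) auto
  then show ?thesis unfolding measurable_count_space_eq2_countable by auto
qed

lemma stopped_measurable:
  assumes "stopping_time_ge1 M F N" and "\<And>n. X n \<in> borel_measurable M"
  shows "stopped X N \<in> borel_measurable M"
  unfolding stopped_def
  by (rule measurable_compose_countable[where f="\<lambda>k \<omega>. X (the_enat k) \<omega>", OF assms(2)
        stopping_time_measurable[OF assms(1)]])

lemma T_eq: "T n \<omega> = (\<Sum>i=1..n. search_time i \<omega>) + (Tra + Tdata)"
  unfolding Tcost_def search_time_def by simp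

lemma T_measurable: "T n \<in> borel_measurable M"
  unfolding T_eq[abs_def] using search_time_measurable by (auto intro!: borel_measurable_sum)

lemma U_measurable: "U n \<in> borel_measurable M"
proof -
  have "(\<lambda>\<omega>. R i \<omega> * (if \<Gamma> \<le> SNR i \<omega> then 1 else 0)) \<in> borel_measurable M" if "i \<in> {1..n}" for i
  proof -
    have i: "1 \<le> i" using that by simp
    show ?thesis using R_measurable[OF i] component_measurable[OF i, of "SNR i"] by measurable
  qed
  then have "(\<lambda>\<omega>. Max ((\<lambda>i. R i \<omega> * (if \<Gamma> \<le> SNR i \<omega> then 1 else 0)) ` {1..n})) \<in> borel_measurable M"
    by (intro borel_measurable_Max) auto
  then show ?thesis unfolding Ureward_def by measurable
qed

lemma nn_integral_stopped_T:
  assumes N: "stopping_time_ge1 M F N" and N_finite: "AE \<omega> in M. N \<omega> \<noteq> \<infinity>"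
  shows "(\<integral>\<^sup>+\<omega>. ennreal (stopped T N \<omega>) \<partial>M)
       = ennreal (Tra + Tdata) + ennreal D * (\<Sum>j. ennreal (prob (reached N j)))"
proof -
  let ?S = "\<lambda>\<omega>. \<Sum>i=1..the_enat (N \<omega>). search_time i \<omega>"
  have "AE \<omega> in M. ennreal (stopped T N \<omega>) = ennreal (Tra + Tdata) + ennreal (?S \<omega>)"
    using AE_regular
  proof eventually_elim
    case (elim \<omega>)
    then have "0 \<le> ?S \<omega>" by (auto simp: regular_def intro!: sum_nonneg)
    then show ?case using Tra Tdata by (simp add: stopped_def T_eq ennreal_plus add.commute)
  qed
  then have "(\<integral>\<^sup>+\<omega>. ennreal (stopped T N \<omega>) \<partial>M)
      = (\<integral>\<^sup>+\<omega>. ennreal (Tra + Tdata) \<partial>M) + (\<integral>\<^sup>+\<omega>. ennreal (?S \<omega>) \<partial>M)"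
    using stopping_time_measurable[OF N] search_time_measurable
    by (simp add: nn_integral_cong_AE nn_integral_add)
  also have "(\<integral>\<^sup>+\<omega>. ennreal (?S \<omega>) \<partial>M) = ennreal D * (\<Sum>j. ennreal (prob (reached N j)))"
    unfolding reached_def
    using search_time_integrable search_time_nonneg reached_events[OF N] D_pos N_finite
      integral_indicator_mult_search_time[OF reached_filtration[OF N]]
    by (intro wald_nn_integral) (auto simp: reached_def)
  finally show ?thesis by (simp add: emeasure_space_1)
qed

definition no_max :: "nat \<Rightarrow> 'a set" where
  "no_max j = {\<omega>\<in>space M. \<forall>k\<in>{1..j}. R k \<omega> \<noteq> Rmax}"

definition found :: "('a \<Rightarrow> enat) \<Rightarrow> 'a set" where
  "found N = {\<omega>\<in>space M. \<exists>j. enat (Suc j) \<le> N \<omega> \<and> R (Suc j) \<omega> = Rmax}"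

lemma no_max_filtration: "no_max j \<in> sets (filtration j)"
proof -
  have R_ev: "{\<omega>\<in>space (filtration j). R k \<omega> = Rmax} \<in> sets (filtration j)" if "k \<in> {1..j}" for k
  proof -
    have "{\<omega>\<in>space (filtration j). R k \<omega> = Rmax} = R k -` {Rmax} \<inter> space (filtration j)" by auto
    then show ?thesis using R_measurable_filtration[of k j] that by (simp add: measurable_sets)
  qed
  have "no_max j = space (filtration j) - (\<Union>k\<in>{1..j}. {\<omega>\<in>space (filtration j). R k \<omega> = Rmax})"
    unfolding no_max_def space_filtration by auto
  also have "\<dots> \<in> sets (filtration j)" using R_ev by (intro sets.Diff sets.top sets.finite_UN) auto
  finally show ?thesis .
qed

lemma not_max_at_if_no_max: "\<omega> \<in> no_max j \<Longrightarrow> k \<in> {1..j} \<Longrightarrow> \<omega> \<notin> max_at k"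
  unfolding no_max_def max_at_def by blast

lemma disjoint_family_first_max: "disjoint_family (\<lambda>j. reached N j \<inter> (no_max j \<inter> max_at (Suc j)))"
  unfolding disjoint_family_on_def
proof (intro ballI impI)
  have later: "no_max n \<inter> max_at (Suc m) = {}" if "m < n" for m n
    using that not_max_at_if_no_max[of _ n "Suc m"] by auto
  fix m n :: nat assume "m \<noteq> n"
  then consider "m < n" | "n < m" by linarith
  then show "reached N m \<inter> (no_max m \<inter> max_at (Suc m)) \<inter> (reached N n \<inter> (no_max n \<inter> max_at (Suc n))) = {}"
    by cases (use later in blast)+
qed

lemma found_eq_first_max: "found N = (\<Union>j. reached N j \<inter> (no_max j \<inter> max_at (Suc j)))"
proof (intro set_eqI iffI)
  fix \<omega> assume found: "\<omega> \<in> found N"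
  define P where "P j \<longleftrightarrow> enat (Suc j) \<le> N \<omega> \<and> R (Suc j) \<omega> = Rmax" for j
  define j where "j = (LEAST j. P j)"
  have \<omega>: "\<omega> \<in> space M" and ex: "\<exists>j. P j" using found by (auto simp: found_def P_def)
  from ex have j: "P j" unfolding j_def by (rule LeastI_ex)
  have least: "\<not> P i" if "i < j" for i using that unfolding j_def by (rule not_less_Least)
  have "R k \<omega> \<noteq> Rmax" if "k \<in> {1..j}" for k
  proof -
    have "enat (Suc (k - 1)) \<le> enat (Suc j)" using that by simp
    then have "enat (Suc (k - 1)) \<le> N \<omega>" using j unfolding P_def by (meson order_trans)
    moreover have "k - 1 < j" using that by auto
    ultimately show ?thesis using least[of "k - 1"] that by (auto simp: P_def)
  qed
  with \<omega> j show "\<omega> \<in> (\<Union>j. reached N j \<inter> (no_max j \<inter> max_at (Suc j)))"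
    by (auto simp: P_def reached_def no_max_def max_at_def)
qed (auto simp: found_def reached_def max_at_def)

lemma
  assumes N: "stopping_time_ge1 M F N"
  shows found_events: "found N \<in> events"
    and prob_found_sums: "(\<lambda>j. prob (reached N j \<inter> no_max j)) sums (prob (found N) / q)"
proof -
  have past: "reached N j \<inter> no_max j \<in> sets (filtration j)" for j
    by (intro sets.Int reached_filtration[OF N] no_max_filtration)
  have ev: "reached N j \<inter> (no_max j \<inter> max_at (Suc j)) \<in> events" for j
  proof -
    have "reached N j \<inter> no_max j \<in> events" using past filtration_subset_events by blast
    moreover have "max_at (Suc j) \<in> events" by (rule max_at_events) simp
    ultimately have "(reached N j \<inter> no_max j) \<inter> max_at (Suc j) \<in> events" by (rule sets.Int)
    then show ?thesis by (simp add: Int_assoc)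
  qed
  have range: "range (\<lambda>j. reached N j \<inter> (no_max j \<inter> max_at (Suc j))) \<subseteq> events"
    using ev by blast
  then show "found N \<in> events" unfolding found_eq_first_max by (rule sets.countable_UN)
  have "(\<lambda>j. prob (reached N j \<inter> (no_max j \<inter> max_at (Suc j)))) sums prob (found N)"
    unfolding found_eq_first_max by (rule finite_measure_UNION[OF range disjoint_family_first_max])
  moreover have "prob (reached N j \<inter> (no_max j \<inter> max_at (Suc j))) = prob (reached N j \<inter> no_max j) * q" for j
    using prob_Int_max_at[OF past[of j]] by (simp add: Int_assoc)
  ultimately have "(\<lambda>j. prob (reached N j \<inter> no_max j) * q) sums prob (found N)" by simp
  then have "(\<lambda>j. prob (reached N j \<inter> no_max j) * q / q) sums (prob (found N) / q)"
    by (rule sums_divide)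
  then show "(\<lambda>j. prob (reached N j \<inter> no_max j)) sums (prob (found N) / q)" using q by simp
qed

lemma U_regular:
  assumes "regular \<omega>" "1 \<le> n"
  shows "U n \<omega> = W * Tdata * Rmax * (if \<exists>i\<in>{1..n}. R i \<omega> = Rmax then 1 else 0)"
proof -
  have R: "\<Gamma> \<le> SNR i \<omega> \<and> R i \<omega> \<in> {0, Rmax}" if "i \<in> {1..n}" for i
    using assms(1) that by (auto simp: regular_def)
  then have "(\<lambda>i. R i \<omega> * (if \<Gamma> \<le> SNR i \<omega> then 1 else 0)) ` {1..n} = (\<lambda>i. R i \<omega>) ` {1..n}"
    by (intro image_cong) auto
  moreover have "Max ((\<lambda>i. R i \<omega>) ` {1..n}) = (if \<exists>i\<in>{1..n}. R i \<omega> = Rmax then Rmax else 0)"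
  proof (cases "\<exists>i\<in>{1..n}. R i \<omega> = Rmax")
    case True
    have "Max ((\<lambda>i. R i \<omega>) ` {1..n}) = Rmax"
    proof (rule Max_eqI)
      show "y \<le> Rmax" if "y \<in> (\<lambda>i. R i \<omega>) ` {1..n}" for y
        using that R Rmax by fastforce
      show "Rmax \<in> (\<lambda>i. R i \<omega>) ` {1..n}" using True by (metis image_eqI)
    qed simp
    with True show ?thesis by simp
  next
    case False
    then have "(\<lambda>i. R i \<omega>) ` {1..n} = (\<lambda>i. 0) ` {1..n}"
      using R by (intro image_cong) auto
    with False assms(2) show ?thesis by simp
  qed
  ultimately show ?thesis by (simp add: Ureward_def)
qed

lemma integral_stopped_U:
  assumes N: "stopping_time_ge1 M F N" and N_finite: "AE \<omega> in M. N \<omega> \<noteq> \<infinity>"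
  shows "(\<integral>\<omega>. stopped U N \<omega> \<partial>M) = W * Tdata * Rmax * prob (found N)"
proof -
  have "AE \<omega> in M. stopped U N \<omega> = W * Tdata * Rmax * indicator (found N) \<omega>"
    using AE_regular N_finite AE_space
  proof eventually_elim
    case (elim \<omega>)
    then obtain n where n: "N \<omega> = enat n" by auto
    have "1 \<le> n" using N elim(3) n by (auto simp: stopping_time_ge1_def one_enat_def)
    moreover have "\<omega> \<in> found N \<longleftrightarrow> (\<exists>i\<in>{1..n}. R i \<omega> = Rmax)"
    proof
      assume "\<omega> \<in> found N"
      then obtain j where "Suc j \<le> n" "R (Suc j) \<omega> = Rmax" using n by (auto simp: found_def)
      then show "\<exists>i\<in>{1..n}. R i \<omega> = Rmax" by (intro bexI[of _ "Suc j"]) auto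
    next
      assume "\<exists>i\<in>{1..n}. R i \<omega> = Rmax"
      then obtain i where "i \<in> {1..n}" "R i \<omega> = Rmax" by blast
      then show "\<omega> \<in> found N"
        using elim(3) n unfolding found_def by (intro CollectI conjI exI[of _ "i - 1"]) auto
    qed
    ultimately show ?case using U_regular[OF elim(1)] by (simp add: stopped_def n indicator_def)
  qed
  moreover have "(\<lambda>\<omega>. W * Tdata * Rmax * indicator (found N) \<omega>) \<in> borel_measurable M"
    using found_events[OF N] by measurable
  ultimately have "(\<integral>\<omega>. stopped U N \<omega> \<partial>M) = (\<integral>\<omega>. W * Tdata * Rmax * indicator (found N) \<omega> \<partial>M)"
    by (intro integral_cong_AE[OF stopped_measurable[OF N U_measurable]])
  also have "\<dots> = W * Tdata * Rmax * prob (found N)" using found_events[OF N] by simp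
  finally show ?thesis .
qed

lemma stopped_T_nonneg: "AE \<omega> in M. 0 \<le> stopped T N \<omega>"
  using AE_regular
proof eventually_elim
  case (elim \<omega>)
  then have "0 \<le> (\<Sum>i=1..the_enat (N \<omega>). search_time i \<omega>)"
    by (auto simp: regular_def intro!: sum_nonneg)
  then show ?case using Tra Tdata by (simp add: stopped_def T_eq)
qed

lemma integral_stopped_T:
  assumes N: "stopping_time_ge1 M F N" and N_finite: "AE \<omega> in M. N \<omega> \<noteq> \<infinity>"
    and summable: "summable (\<lambda>j. prob (reached N j))"
  shows "(\<integral>\<omega>. stopped T N \<omega> \<partial>M) = Tra + Tdata + D * (\<Sum>j. prob (reached N j))"
proof -
  have s: "0 \<le> (\<Sum>j. prob (reached N j))" using summable by (intro suminf_nonneg) auto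
  have "ennreal (Tra + Tdata + D * (\<Sum>j. prob (reached N j)))
      = ennreal (Tra + Tdata) + ennreal D * ennreal (\<Sum>j. prob (reached N j))"
    using Tra Tdata D_pos s by (subst ennreal_plus) (auto simp: ennreal_mult)
  also have "\<dots> = (\<integral>\<^sup>+\<omega>. ennreal (stopped T N \<omega>) \<partial>M)"
    using summable by (simp add: nn_integral_stopped_T[OF N N_finite] suminf_ennreal2)
  finally have "(\<integral>\<omega>. stopped T N \<omega> \<partial>M) = enn2real (ennreal (Tra + Tdata + D * (\<Sum>j. prob (reached N j))))"
    by (simp add: integral_eq_nn_integral[OF stopped_measurable[OF N T_measurable] stopped_T_nonneg])
  also have "\<dots> = Tra + Tdata + D * (\<Sum>j. prob (reached N j))"
    using Tra Tdata D_pos s by (intro enn2real_ennreal) simp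
  finally show ?thesis .
qed

lemma classC_summable_reached:
  assumes "classC M F T N"
  shows "summable (\<lambda>j. prob (reached N j))"
proof -
  from assms have N: "stopping_time_ge1 M F N" and N_finite: "AE \<omega> in M. N \<omega> \<noteq> \<infinity>"
    and int: "integrable M (stopped T N)"
    unfolding classC_def by auto
  have "(\<integral>\<^sup>+\<omega>. ennreal (stopped T N \<omega>) \<partial>M) \<le> (\<integral>\<^sup>+\<omega>. ennreal (norm (stopped T N \<omega>)) \<partial>M)"
    by (intro nn_integral_mono ennreal_leI) simp
  also have "\<dots> < \<infinity>" using int by (simp add: integrable_iff_bounded)
  finally have "(\<integral>\<^sup>+\<omega>. ennreal (stopped T N \<omega>) \<partial>M) < \<infinity>" .
  then have "ennreal D * (\<Sum>j. ennreal (prob (reached N j))) \<noteq> \<top>"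
    by (simp add: nn_integral_stopped_T[OF N N_finite])
  then have "(\<Sum>j. ennreal (prob (reached N j))) \<noteq> \<top>"
    using D_pos by (auto simp: ennreal_mult_top)
  then show ?thesis by (intro summable_suminf_not_top) auto
qed

lemma ratio_le_optimal_rate:
  assumes N: "classC M F T N"
  shows "ratio M T U N \<le> q * W * Tdata * Rmax / (D + q * (Tra + Tdata))"
proof -
  from N have st: "stopping_time_ge1 M F N" and N_finite: "AE \<omega> in M. N \<omega> \<noteq> \<infinity>"
    unfolding classC_def by auto
  note summable = classC_summable_reached[OF N]
  let ?s = "\<Sum>j. prob (reached N j)"
  have "(\<Sum>j. prob (reached N j \<inter> no_max j)) \<le> ?s"
    using prob_found_sums[OF st] summable reached_events[OF st]
    by (intro suminf_le finite_measure_mono) (auto simp: sums_iff)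
  then have found_le: "prob (found N) \<le> q * ?s"
    using sums_unique[OF prob_found_sums[OF st]] q by (simp add: field_simps)
  have "ratio M T U N = (W * Tdata * Rmax) * prob (found N) / (Tra + Tdata + D * ?s)"
    unfolding ratio_def integral_stopped_U[OF st N_finite] integral_stopped_T[OF st N_finite summable]
    by simp
  also have "\<dots> \<le> q * (W * Tdata * Rmax) / (D + q * (Tra + Tdata))"
    using W Tdata Rmax Tra D_pos q found_le summable
    by (intro reward_rate_bound) (auto intro: suminf_nonneg)
  finally show ?thesis by (simp add: mult.assoc)
qed

definition threshold :: real where
  "threshold = Rmax / (1 + D / (q * (Tra + Tdata)))"

abbreviation "Nstar \<equiv> first_exceed R threshold"

lemma threshold_bounds: "0 < threshold" "threshold \<le> Rmax"
proof -
  have "0 < D / (q * (Tra + Tdata))" using D_pos q Tra Tdata by simp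
  then show "0 < threshold" "threshold \<le> Rmax" using Rmax by (simp_all add: threshold_def divide_le_eq)
qed

lemma Nstar_stopping_time: "stopping_time_ge1 M F Nstar"
  unfolding stopping_time_ge1_def
proof (intro conjI ballI allI)
  fix n
  show "{\<omega>\<in>space M. Nstar \<omega> = enat n} \<in> F n"
    unfolding sets_filtration[symmetric]
  proof (cases "1 \<le> n")
    case True
    have "{\<omega>\<in>space M. Nstar \<omega> = enat n} = {\<omega>\<in>space (filtration n). threshold \<le> R n \<omega>} \<inter>
        (space (filtration n) - (\<Union>k\<in>{1..<n}. {\<omega>\<in>space (filtration n). threshold \<le> R k \<omega>}))"
      unfolding space_filtration first_exceed_eq_enat_iff using True by (auto simp: not_le)
    moreover have "{\<omega>\<in>space (filtration n). threshold \<le> R k \<omega>} \<in> sets (filtration n)"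
      if "1 \<le> k" "k \<le> n" for k
      using R_measurable_filtration[OF that] by measurable
    ultimately show "{\<omega>\<in>space M. Nstar \<omega> = enat n} \<in> sets (filtration n)"
      using True by (auto intro!: sets.Int sets.Diff sets.finite_UN)
  qed (simp add: first_exceed_eq_enat_iff)
qed (rule first_exceed_ge_one)

lemma no_max_events: "no_max j \<in> events"
  using no_max_filtration filtration_subset_events by blast

lemma prob_no_max: "prob (no_max j) = (1 - q) ^ j"
proof (induction j)
  case 0
  have "no_max 0 = space M" by (auto simp: no_max_def)
  then show ?case by (simp add: prob_space)
next
  case (Suc j)
  have "no_max (Suc j) = no_max j - max_at (Suc j)"
    by (auto simp: no_max_def max_at_def atLeastAtMostSuc_conv)
  then have "prob (no_max (Suc j)) = prob (no_max j) - prob (no_max j \<inter> max_at (Suc j))"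
    using no_max_events max_at_events[of "Suc j"] by (simp add: finite_measure_Diff')
  also have "\<dots> = prob (no_max j) * (1 - q)"
    using prob_Int_max_at[OF no_max_filtration] by (simp add: algebra_simps)
  finally show ?case using Suc by simp
qed

lemma AE_reached_Nstar: "AE \<omega> in M. \<omega> \<in> reached Nstar j \<longleftrightarrow> \<omega> \<in> no_max j"
  using AE_regular
proof eventually_elim
  case (elim \<omega>)
  then have "R k \<omega> < threshold \<longleftrightarrow> R k \<omega> \<noteq> Rmax" if "1 \<le> k" for k
    using that threshold_bounds by (force simp: regular_def)
  then show ?case
    by (auto simp: reached_def no_max_def Suc_ile_eq less_first_exceed_iff)
qed

lemma prob_reached_Nstar: "prob (reached Nstar j) = (1 - q) ^ j"
proof -
  have "prob (reached Nstar j) = prob (no_max j)"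
    using AE_reached_Nstar reached_events[OF Nstar_stopping_time] no_max_events
    by (rule measure_eq_AE)
  then show ?thesis by (simp add: prob_no_max)
qed

lemma prob_reached_no_max_Nstar: "prob (reached Nstar j \<inter> no_max j) = (1 - q) ^ j"
proof -
  have "AE \<omega> in M. \<omega> \<in> reached Nstar j \<inter> no_max j \<longleftrightarrow> \<omega> \<in> no_max j"
    using AE_reached_Nstar[of j] by eventually_elim auto
  then have "prob (reached Nstar j \<inter> no_max j) = prob (no_max j)"
    using reached_events[OF Nstar_stopping_time] no_max_events by (intro measure_eq_AE) auto
  then show ?thesis by (simp add: prob_no_max)
qed

lemma geometric_sums_one_minus_q: "(\<lambda>j. (1 - q) ^ j) sums (1 / q)"
  using geometric_sums[of "1 - q"] q by simp

lemma Nstar_finite: "AE \<omega> in M. Nstar \<omega> \<noteq> \<infinity>"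
proof -
  let ?I = "{\<omega>\<in>space M. Nstar \<omega> = \<infinity>}"
  have I_ev: "?I \<in> events" using stopping_time_measurable[OF Nstar_stopping_time] by measurable
  have "prob ?I \<le> (1 - q) ^ j" for j
  proof -
    have "prob ?I \<le> prob (reached Nstar j)"
      using reached_events[OF Nstar_stopping_time] by (intro finite_measure_mono) (auto simp: reached_def)
    then show ?thesis by (simp add: prob_reached_Nstar)
  qed
  moreover have "(\<lambda>j. (1 - q) ^ j) \<longlonglongrightarrow> 0" using q by (intro LIMSEQ_realpow_zero) auto
  ultimately have "prob ?I \<le> 0" by (intro LIMSEQ_le_const) auto
  then have "prob ?I = 0" using measure_nonneg[of M ?I] by linarith
  then show ?thesis using AE_iff_measurable[OF I_ev] by (auto simp: emeasure_eq_measure)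
qed

lemma integral_stopped_T_Nstar: "(\<integral>\<omega>. stopped T Nstar \<omega> \<partial>M) = Tra + Tdata + D / q"
  using integral_stopped_T[OF Nstar_stopping_time Nstar_finite] geometric_sums_one_minus_q
  by (simp add: prob_reached_Nstar sums_iff)

lemma classC_Nstar: "classC M F T Nstar"
proof -
  have "integrable M (stopped T Nstar)"
  proof (rule integrableI_nonneg)
    show "AE \<omega> in M. 0 \<le> stopped T Nstar \<omega>" by (rule stopped_T_nonneg)
    have "(\<Sum>j. ennreal (prob (reached Nstar j))) = ennreal (1 / q)"
      using geometric_sums_one_minus_q q by (simp add: prob_reached_Nstar suminf_ennreal2 sums_iff)
    then show "(\<integral>\<^sup>+\<omega>. ennreal (stopped T Nstar \<omega>) \<partial>M) < \<infinity>"
      by (simp add: nn_integral_stopped_T[OF Nstar_stopping_time Nstar_finite] ennreal_mult_less_top)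
  qed (rule stopped_measurable[OF Nstar_stopping_time T_measurable])
  then show ?thesis
    unfolding classC_def using Nstar_stopping_time Nstar_finite by simp
qed

lemma prob_found_Nstar: "prob (found Nstar) = 1"
proof -
  have "(\<lambda>j. (1 - q) ^ j) sums (prob (found Nstar) / q)"
    using prob_found_sums[OF Nstar_stopping_time] by (simp add: prob_reached_no_max_Nstar)
  then have "prob (found Nstar) / q = 1 / q" using geometric_sums_one_minus_q by (rule sums_unique2)
  then show ?thesis using q by (simp add: field_simps)
qed

lemma ratio_Nstar: "ratio M T U Nstar = q * W * Tdata * Rmax / (D + q * (Tra + Tdata))"
proof -
  have "ratio M T U Nstar = W * Tdata * Rmax / (Tra + Tdata + D / q)"
    unfolding ratio_def integral_stopped_U[OF Nstar_stopping_time Nstar_finite]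
      integral_stopped_T_Nstar prob_found_Nstar by simp
  also have "\<dots> = q * W * Tdata * Rmax / (D + q * (Tra + Tdata))"
    using q by (simp add: field_simps)
  finally show ?thesis .
qed

lemma lam_star_eq: "lam_star M F T U = q * W * Tdata * Rmax / (D + q * (Tra + Tdata))"
  unfolding lam_star_def
proof (rule cSup_eq_maximum)
  show "q * W * Tdata * Rmax / (D + q * (Tra + Tdata)) \<in> {ratio M T U N |N. classC M F T N}"
    using classC_Nstar ratio_Nstar by force
qed (use ratio_le_optimal_rate in auto)

end

theorem corollary1:
  fixes M :: "'a measure"
    and SNR beta Y Z :: "nat \<Rightarrow> 'a \<Rightarrow> real"
    and Tsyn Tsib Tra Tdata W \<Gamma> Rmax q :: real
    and L K :: nat
  assumes M: "prob_space M"
    and Tsyn: "Tsyn > 0" and Tsib: "Tsib \<ge> Tsyn"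
    and K: "K \<ge> 1" "Tsib = real K * Tsyn"
    and Tra: "Tra > 0" and Tdata: "Tdata > 0" and W: "W > 0" and L: "L \<ge> 1"
    and iid_indep: "prob_space.indep_vars M (\<lambda>_. borel)
          (\<lambda>i \<omega>. (SNR i \<omega>, beta i \<omega>, Y i \<omega>, Z i \<omega>)) {1..}"
    and iid_dist: "\<forall>i\<ge>1. distr M borel (\<lambda>\<omega>. (SNR i \<omega>, beta i \<omega>, Y i \<omega>, Z i \<omega>))
                       = distr M borel (\<lambda>\<omega>. (SNR 1 \<omega>, beta 1 \<omega>, Y 1 \<omega>, Z 1 \<omega>))"
    and SNR_nonneg: "\<forall>i\<ge>1. AE \<omega> in M. SNR i \<omega> \<ge> 0"
    and beta_range: "\<forall>i\<ge>1. AE \<omega> in M. 0 \<le> beta i \<omega> \<and> beta i \<omega> \<le> 1"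
    and Y_nonneg: "\<forall>i\<ge>1. AE \<omega> in M. Y i \<omega> \<ge> 0"
    and Y_mean: "\<forall>i\<ge>1. integrable M (Y i) \<and> (\<integral>\<omega>. Y i \<omega> \<partial>M) = Tsyn / 2"
    and Z_unif: "\<forall>i\<ge>1. \<forall>j<K. measure M {\<omega>\<in>space M. Z i \<omega> = real j * Tsyn} = 1 / real K"
    and Z_indep: "\<forall>i\<ge>1. prob_space.indep_var M borel (Z i) borel (SNR i)"
    and SNR_Gamma: "\<forall>i\<ge>1. AE \<omega> in M. SNR i \<omega> \<ge> \<Gamma>"
    and Rmax: "Rmax > 0" and q: "0 < q" "q \<le> 1"
    and R_dist: "\<forall>i\<ge>1. measure M {\<omega>\<in>space M. Rmet SNR beta i \<omega> = Rmax} = q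
                     \<and> measure M {\<omega>\<in>space M. Rmet SNR beta i \<omega> = 0} = 1 - q"
  shows "let T = Tcost SNR Y Z Tsyn L \<Gamma> Tra Tdata;
             U = Ureward SNR beta \<Gamma> W Tdata;
             F = cs_filt M SNR beta Y Z;
             D = (real L - 1/2) * Tsyn + (Tsib - Tsyn) / 2;
             \<phi> = D / (q * (Tra + Tdata));
             Nstar = first_exceed (Rmet SNR beta) (Rmax / (1 + \<phi>))
         in lam_star M F T U = q * W * Tdata * Rmax / (D + q * (Tra + Tdata))
            \<and> classC M F T Nstar
            \<and> ratio M T U Nstar = lam_star M F T U"
proof -
  interpret cell_search M SNR beta Y Z Tsyn Tsib Tra Tdata W \<Gamma> Rmax q L K
    by (intro cell_search.intro cell_search_axioms.intro) (rule assms)+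
  show ?thesis
    unfolding Let_def D_def[symmetric] threshold_def[symmetric]
    using lam_star_eq classC_Nstar ratio_Nstar by simp
qed

end
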